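(* Consider sources $m\neq n$ and a relay $i$. Let $A$ be a nonempty set of relays other than $i$, so that the coalition $\mathcal S_m=\{m\}\cup A\cup\{i\}$ contains more than two members, and let $\mathcal S_n=\{n,i\}$ be the coalition in which relay $i$ is the only relay helping source $n$. Ignore costs ($\kappa=0$) and use the user-fairness payoff. If $\phi_i(\mathcal S_m)<\phi_i(\mathcal S_n)$, i.e. $$\frac{G_{mi}}{D_m+G_{mi}+\sum_{j\in A}G_{mj}}<\frac{G_{ni}}{D_n+G_{ni}},$$ then $v(\mathcal S_m)+v(\{n\})<v(\{m\}\cup A)+v(\mathcal S_n)$.
   Context: Multi-source model: $M$ sources, relays, one destination. For source $k$ and relay $j$, $G_{kj}=P_{kj}|g_j|^2/(1+c_j^\alpha)\ge0$ is the SNR contribution of relay $j$ when helping source $k$ (with $P_{kj}=\max\{0,\eta(P|h_{kj}|^2/(1+d_{kj}^\alpha)-\tau)\}$ the harvested power), and $D_k=P|h_{dk}|^2/(1+d_{0k}^\alpha)\ge0$ is the direct-link SNR of source $k$. A coalition $\mathcal S_k$ consists of source $k$ and a set $B$ of relays; $SNR_{\mathcal S_k}=D_k+\sum_{j\in B}G_{kj}$. User-fairness payoff of relay $j\in B$: $\phi_j(\mathcal S_k)=\frac{SNR_{\mathcal S_k}-SNR_{\mathcal S_k\setminus\{j\}}}{SNR_{\mathcal S_k}}-c(\mathcal S_k)=\frac{G_{kj}}{SNR_{\mathcal S_k}}-c(\mathcal S_k)$, where the cost $c(\mathcal S_k)=\kappa\cdot\#\{\text{relays in }B\text{ that decode source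 }k\}$. Coalition value $v(\mathcal S_k)=\sum_{j\in B}\phi_j(\mathcal S_k)$ (so a coalition with no relays has value $0$). Assume all SNRs appearing in denominators are positive (e.g. $D_m>0$ and $D_n+G_{ni}>0$). *)

theory Defs
  imports Main "HOL.Real"
begin

(* A coalition S_k is source k together with a finite set B of relays.
   G k j : SNR contribution of relay j helping source k (>= 0)
   D k   : direct-link SNR of source k (>= 0)
   dec k j : relay j decodes source k (only used for the cost term). *)

definition snr :: "('s \<Rightarrow> real) \<Rightarrow> ('s \<Rightarrow> 'r \<Rightarrow> real) \<Rightarrow> 's \<Rightarrow> 'r set \<Rightarrow> real" where
  "snr D G k B = D k + (\<Sum>j\<in>B. G k j)"

definition cost :: "real \<Rightarrow> ('s \<Rightarrow> 'r \<Rightarrow> bool) \<Rightarrow> 's \<Rightarrow> 'r set \<Rightarrow> real" where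
  "cost kappa dec k B = kappa * real (card {j\<in>B. dec k j})"

definition phi :: "real \<Rightarrow> ('s \<Rightarrow> 'r \<Rightarrow> bool) \<Rightarrow> ('s \<Rightarrow> real) \<Rightarrow> ('s \<Rightarrow> 'r \<Rightarrow> real)
                  \<Rightarrow> 's \<Rightarrow> 'r set \<Rightarrow> 'r \<Rightarrow> real" where
  "phi kappa dec D G k B j =
     (snr D G k B - snr D G k (B - {j})) / snr D G k B - cost kappa dec k B"

definition coal_value :: "real \<Rightarrow> ('s \<Rightarrow> 'r \<Rightarrow> bool) \<Rightarrow> ('s \<Rightarrow> real) \<Rightarrow> ('s \<Rightarrow> 'r \<Rightarrow> real)
                  \<Rightarrow> 's \<Rightarrow> 'r set \<Rightarrow> real" where
  "coal_value kappa dec D G k B = (\<Sum>j\<in>B. phi kappa dec D G k B j)"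

end

theory Submission
  imports Defs
begin

(* Without costs, the user-fairness payoff of a relay j in the
   coalition {k} \<union> B is its share G k j / SNR of the coalition's SNR, so the
   coalition value is the relays' total share (\<Sum>j\<in>B. G k j) / SNR.
   Splitting the value of S_m = {m} \<union> A \<union> {i} into the share of i and the
   share of A, the share of i is phi_i(S_m) < phi_i(S_n) = v(S_n) by hypothesis,
   and the share of A only shrinks when i joins (the denominator grows), so it
   is at most v({m} \<union> A). *)

lemma phi_no_cost:
  assumes "finite B" and "j \<in> B"
  shows "phi 0 dec D G k B j = G k j / snr D G k B"
  using assms unfolding phi_def cost_def snr_def by (simp add: sum_diff1)

lemma coal_value_no_cost:
  assumes "finite B"
  shows "coal_value 0 dec D G k B = (\<Sum>j\<in>B. G k j) / snr D G k B"
  unfolding coal_value_def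
  by (simp add: phi_no_cost[OF assms] sum_divide_distrib)

lemma share_antimono_insert:
  assumes "finite B" and "i \<notin> B"
    and G_nonneg: "\<And>j. G k j \<ge> 0" and snr_pos: "snr D G k B > 0"
  shows "(\<Sum>j\<in>B. G k j) / snr D G k (insert i B) \<le> (\<Sum>j\<in>B. G k j) / snr D G k B"
proof (rule divide_left_mono)
  show "0 \<le> (\<Sum>j\<in>B. G k j)" by (simp add: G_nonneg sum_nonneg)
  show grow: "snr D G k B \<le> snr D G k (insert i B)"
    using assms by (simp add: snr_def)
  show "0 < snr D G k (insert i B) * snr D G k B"
    using grow snr_pos by simp
qed

theorem proposition2:
  fixes D :: "'s \<Rightarrow> real" and G :: "'s \<Rightarrow> 'r \<Rightarrow> real"
    and dec :: "'s \<Rightarrow> 'r \<Rightarrow> bool" and kappa :: real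
    and m n :: 's and i :: 'r and A :: "'r set"
  assumes G_nonneg: "\<And>k j. G k j \<ge> 0"
    and D_nonneg: "\<And>k. D k \<ge> 0"
    and mn: "m \<noteq> n"
    and A_fin: "finite A" and A_ne: "A \<noteq> {}" and iA: "i \<notin> A"
    and Dm_pos: "D m > 0" and Dn_pos: "D n + G n i > 0"
    and no_cost: "kappa = 0"
    and hyp: "phi kappa dec D G m (insert i A) i < phi kappa dec D G n {i} i"
  shows "coal_value kappa dec D G m (insert i A) + coal_value kappa dec D G n {}
         < coal_value kappa dec D G m A + coal_value kappa dec D G n {i}"
proof -
  let ?S = "snr D G m (insert i A)"
  have split_Sm: "coal_value kappa dec D G m (insert i A)
      = phi kappa dec D G m (insert i A) i + (\<Sum>j\<in>A. G m j) / ?S"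
    using no_cost A_fin iA
    by (simp add: coal_value_no_cost phi_no_cost add_divide_distrib)
  have "snr D G m A > 0"
    using Dm_pos G_nonneg by (simp add: snr_def add_pos_nonneg sum_nonneg)
  then have share_A: "(\<Sum>j\<in>A. G m j) / ?S \<le> coal_value kappa dec D G m A"
    using share_antimono_insert[where G = G and k = m, OF A_fin iA G_nonneg] no_cost A_fin
    by (simp add: coal_value_no_cost)
  have value_Sn: "coal_value kappa dec D G n {i} = phi kappa dec D G n {i} i"
    by (simp add: coal_value_def)
  have "coal_value kappa dec D G n {} = 0" by (simp add: coal_value_def)
  then show ?thesis using split_Sm share_A value_Sn hyp by linarith
qed

end
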